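(* Let $(X,\pi)$ be a finite symmetric two-player game with relative payoff game $(X,\Delta)$. If $(X,\Delta)$ is an exact potential game, then imitation is essentially unbeatable.
   Context: $\pi(x,y)$ is the payoff of the player choosing $x$ against $y$; $\Delta(x,y)=\pi(x,y)-\pi(y,x)$. The symmetric game $(X,\Delta)$ is an exact potential game if there is $P:X\times X\to\mathbb{R}$ such that for all $y,x,x'\in X$: $\Delta(x,y)-\Delta(x',y)=P(x,y)-P(x',y)$ and $\Delta(x,y)-\Delta(x',y)=P(y,x)-P(y,x')$. Let $\hat\Delta:=\max_{x,y\in X}\Delta(x,y)$. Imitate-the-best: given initial $y_0\in X$ and any opponent sequence $(x_t)_{t\ge0}$, $y_t=x_{t-1}$ if $\Delta(x_{t-1},y_{t-1})>0$ and $y_t=y_{t-1}$ otherwise. Imitation is essentially unbeatable if for every $y_0\in X$ and every sequence $(x_t)$, $\limsup_{T\to\infty}\sum_{t=0}^T\Delta(x_t,y_t)\le\hat\Delta$. *)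

theory Defs
  imports Complex_Main "HOL-Library.Liminf_Limsup" "HOL-Library.Extended_Real"
begin

definition rel_payoff :: "('a \<Rightarrow> 'a \<Rightarrow> real) \<Rightarrow> 'a \<Rightarrow> 'a \<Rightarrow> real" where
  "rel_payoff payoff x y = payoff x y - payoff y x"

definition exact_potential_game :: "'a set \<Rightarrow> ('a \<Rightarrow> 'a \<Rightarrow> real) \<Rightarrow> bool" where
  "exact_potential_game X D \<longleftrightarrow>
     (\<exists>P :: 'a \<Rightarrow> 'a \<Rightarrow> real. \<forall>y\<in>X. \<forall>x\<in>X. \<forall>x'\<in>X.
        D x y - D x' y = P x y - P x' y \<and> D x y - D x' y = P y x - P y x')"

definition max_rel :: "'a set \<Rightarrow> ('a \<Rightarrow> 'a \<Rightarrow> real) \<Rightarrow> real" where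
  "max_rel X D = Max ((\<lambda>(x, y). D x y) ` (X \<times> X))"

primrec imitate :: "('a \<Rightarrow> 'a \<Rightarrow> real) \<Rightarrow> 'a \<Rightarrow> (nat \<Rightarrow> 'a) \<Rightarrow> nat \<Rightarrow> 'a" where
  "imitate D y0 xs 0 = y0"
| "imitate D y0 xs (Suc t) =
     (if D (xs t) (imitate D y0 xs t) > 0 then xs t else imitate D y0 xs t)"

definition essentially_unbeatable :: "'a set \<Rightarrow> ('a \<Rightarrow> 'a \<Rightarrow> real) \<Rightarrow> bool" where
  "essentially_unbeatable X D \<longleftrightarrow>
     (\<forall>y0\<in>X. \<forall>xs :: nat \<Rightarrow> 'a. (\<forall>t. xs t \<in> X) \<longrightarrow>
        limsup (\<lambda>T. ereal (\<Sum>t\<le>T. D (xs t) (imitate D y0 xs t))) \<le> ereal (max_rel X D))"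

end

theory Submission
  imports Defs
begin

text \<open>For a skew-symmetric game, an exact potential P yields \<Delta>(x, y) = f x - f y with
  f x = P(x, x) / 2. An imitation step either copies the opponent, and then its relative
  payoff equals the increase of f, or has non-positive relative payoff while f stays put.
  Hence the cumulative relative payoff up to T telescopes to at most
  f(y_{T+1}) - f(y_0) = \<Delta>(y_{T+1}, y_0), which is bounded by max \<Delta>.\<close>

lemma rel_payoff_antisym: "rel_payoff payoff x y = - rel_payoff payoff y x"
  unfolding rel_payoff_def by simp

lemma exact_potential_game_imp_difference_form:
  assumes antisym: "\<And>x y. D x y = - D y x"
    and "exact_potential_game X D"
  obtains f where "\<And>x y. x \<in> X \<Longrightarrow> y \<in> X \<Longrightarrow> D x y = f x - f y"
proof -
  obtain P where P: "\<forall>y\<in>X. \<forall>x\<in>X. \<forall>x'\<in>X.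
      D x y - D x' y = P x y - P x' y \<and> D x y - D x' y = P y x - P y x'"
    using assms(2) unfolding exact_potential_game_def by blast
  have "D x y = P x x / 2 - P y y / 2" if "x \<in> X" "y \<in> X" for x y
  proof -
    have diag: "D z z = 0" for z using antisym[of z z] by simp
    have "D x y - D y y = P y x - P y y"
      using P[rule_format, OF that(2) that(1) that(2)] by (rule conjunct2)
    moreover have "D y x - D x x = P y x - P x x"
      using P[rule_format, OF that(1) that(2) that(1)] by (rule conjunct1)
    ultimately show ?thesis using antisym[of x y] diag by (simp add: field_simps)
  qed
  then show ?thesis by (rule that)
qed

lemma imitate_in:
  assumes "y0 \<in> X" and "\<And>t. xs t \<in> X"
  shows "imitate D y0 xs t \<in> X"
  by (induction t) (use assms in auto)

lemma imitate_step_le: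
  assumes "D (xs t) (imitate D y0 xs t) = f (xs t) - f (imitate D y0 xs t)"
  shows "D (xs t) (imitate D y0 xs t) \<le> f (imitate D y0 xs (Suc t)) - f (imitate D y0 xs t)"
  using assms by auto

lemma imitate_sum_le_difference:
  assumes "y0 \<in> X" and "\<And>t. xs t \<in> X"
    and f: "\<And>x y. x \<in> X \<Longrightarrow> y \<in> X \<Longrightarrow> D x y = f x - f y"
  shows "(\<Sum>t\<le>T. D (xs t) (imitate D y0 xs t)) \<le> f (imitate D y0 xs (Suc T)) - f y0"
proof -
  let ?y = "imitate D y0 xs"
  have "(\<Sum>t\<le>T. D (xs t) (?y t)) \<le> (\<Sum>t<Suc T. f (?y (Suc t)) - f (?y t))"
    unfolding lessThan_Suc_atMost
    by (intro sum_mono imitate_step_le f assms(2) imitate_in[OF assms(1,2)])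
  also have "\<dots> = f (?y (Suc T)) - f y0"
    using sum_lessThan_telescope[of "\<lambda>t. f (?y t)" "Suc T"] by simp
  finally show ?thesis .
qed

lemma max_rel_ge:
  assumes "finite X" and "a \<in> X" and "b \<in> X"
  shows "D a b \<le> max_rel X D"
  unfolding max_rel_def by (rule Max_ge) (use assms in force)+

lemma essentially_unbeatable_if_difference_form:
  assumes "finite X"
    and f: "\<And>x y. x \<in> X \<Longrightarrow> y \<in> X \<Longrightarrow> D x y = f x - f y"
  shows "essentially_unbeatable X D"
  unfolding essentially_unbeatable_def
proof (intro ballI allI impI)
  fix y0 and xs :: "nat \<Rightarrow> 'a"
  assume y0: "y0 \<in> X" and "\<forall>t. xs t \<in> X"
  then have xs: "\<And>t. xs t \<in> X" by blast
  let ?y = "imitate D y0 xs"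
  have "(\<Sum>t\<le>T. D (xs t) (?y t)) \<le> max_rel X D" for T
  proof -
    have yX: "?y (Suc T) \<in> X" using imitate_in[OF y0 xs] .
    have "(\<Sum>t\<le>T. D (xs t) (?y t)) \<le> f (?y (Suc T)) - f y0"
      using imitate_sum_le_difference[OF y0 xs f] .
    also have "\<dots> = D (?y (Suc T)) y0" using f[OF yX y0] by simp
    also have "\<dots> \<le> max_rel X D" using max_rel_ge[OF assms(1) yX y0] .
    finally show ?thesis .
  qed
  then show "limsup (\<lambda>T. ereal (\<Sum>t\<le>T. D (xs t) (?y t))) \<le> ereal (max_rel X D)"
    by (intro Limsup_bounded) auto
qed

theorem corollary5:
  fixes X :: "'a set" and payoff :: "'a \<Rightarrow> 'a \<Rightarrow> real"
  assumes "finite X"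
    and "exact_potential_game X (rel_payoff payoff)"
  shows "essentially_unbeatable X (rel_payoff payoff)"
proof -
  obtain f where "\<And>x y. x \<in> X \<Longrightarrow> y \<in> X \<Longrightarrow> rel_payoff payoff x y = f x - f y"
    using exact_potential_game_imp_difference_form[OF rel_payoff_antisym assms(2)] by blast
  then show ?thesis using essentially_unbeatable_if_difference_form[OF assms(1)] by blast
qed

end
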